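(* Let $\phi:\mathbb{M}_n\to\mathbb{M}_m$ be a positive linear map with Hilbert–Schmidt adjoint $\phi^*$. The following are equivalent: (1) $\phi(K^*K)\geq\phi(K)^*\phi(K)$ for all $K\in\mathbb{M}_n$; (2) for every positive definite $X\in\mathbb{M}_m$, the block operator \[ \begin{pmatrix} R_{\phi^*(X)} & \phi^*\\ \phi & R_X^{-1}\end{pmatrix}\in B(\mathcal{H}_n\oplus\mathcal{H}_m) \] is positive semidefinite.
   Context: $\mathcal{H}_n$ denotes $\mathbb{M}_n$ (complex $n\times n$ matrices) equipped with the Hilbert–Schmidt inner product $\langle A,B\rangle=\mathrm{Tr}[A^*B]$; $\phi$ is viewed as an operator $\mathcal{H}_n\to\mathcal{H}_m$ and $\phi^*:\mathcal{H}_m\to\mathcal{H}_n$ is its adjoint. For $X\in\mathbb{M}_k$, $R_X$ is the operator on $\mathcal{H}_k$ given by $R_X(A)=AX$. The block operator has $R_{\phi^*(X)}$ acting on $\mathcal{H}_n$, $\phi^*$ mapping $\mathcal{H}_m\to\mathcal{H}_n$, $\phi$ mapping $\mathcal{H}_n\to\mathcal{H}_m$, and $R_X^{-1}$ acting on $\mathcal{H}_m$. A positive map sends positive semidefinite matrices to positive semidefinite matrices. *)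

theory Defs
  imports "HOL-Analysis.Analysis"
begin

definition cnonneg :: "complex \<Rightarrow> bool" where
  "cnonneg z \<longleftrightarrow> Im z = 0 \<and> 0 \<le> Re z"

definition cadj :: "complex^'k^'k \<Rightarrow> complex^'k^'k" where
  "cadj A = (\<chi> i j. cnj (A $ j $ i))"

text \<open>Hilbert-Schmidt inner product Tr[A^* B].\<close>
definition hs :: "complex^'k^'k \<Rightarrow> complex^'k^'k \<Rightarrow> complex" where
  "hs A B = (\<Sum>i\<in>UNIV. \<Sum>j\<in>UNIV. cnj (A $ i $ j) * B $ i $ j)"

definition csmult :: "complex \<Rightarrow> complex^'k^'k \<Rightarrow> complex^'k^'k" where
  "csmult c A = (\<chi> i j. c * A $ i $ j)"

definition clin :: "(complex^'k^'k \<Rightarrow> complex^'l^'l) \<Rightarrow> bool" where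
  "clin f \<longleftrightarrow> (\<forall>A B. f (A + B) = f A + f B) \<and> (\<forall>c A. f (csmult c A) = csmult c (f A))"

definition psd :: "complex^'k^'k \<Rightarrow> bool" where
  "psd A \<longleftrightarrow> (\<forall>x::complex^'k. cnonneg (\<Sum>i\<in>UNIV. cnj (x $ i) * (A *v x) $ i))"

definition pd :: "complex^'k^'k \<Rightarrow> bool" where
  "pd A \<longleftrightarrow> (\<forall>x::complex^'k. x \<noteq> 0 \<longrightarrow>
      (let z = (\<Sum>i\<in>UNIV. cnj (x $ i) * (A *v x) $ i) in Im z = 0 \<and> 0 < Re z))"

definition positive_map :: "(complex^'k^'k \<Rightarrow> complex^'l^'l) \<Rightarrow> bool" where
  "positive_map f \<longleftrightarrow> (\<forall>A. psd A \<longrightarrow> psd (f A))"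

definition is_hs_adjoint :: "(complex^'l^'l \<Rightarrow> complex^'k^'k) \<Rightarrow> (complex^'k^'k \<Rightarrow> complex^'l^'l) \<Rightarrow> bool" where
  "is_hs_adjoint psi phi \<longleftrightarrow> (\<forall>X Y. hs (psi Y) X = hs Y (phi X))"

definition Rmul :: "complex^'k^'k \<Rightarrow> complex^'k^'k \<Rightarrow> complex^'k^'k" where
  "Rmul X A = A ** X"

text \<open>The block operator [[R_{phi^*(X)}, phi^*],[phi, R_X^{-1}]] on H_n (+) H_m;
  R_X^{-1} = R_{X^{-1}}.\<close>
definition block_op ::
  "(complex^'n^'n \<Rightarrow> complex^'m^'m) \<Rightarrow> (complex^'m^'m \<Rightarrow> complex^'n^'n) \<Rightarrow> complex^'m^'m
   \<Rightarrow> ((complex^'n^'n) \<times> (complex^'m^'m)) \<Rightarrow> ((complex^'n^'n) \<times> (complex^'m^'m))" where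
  "block_op phi psi X = (\<lambda>(A, B). (Rmul (psi X) A + psi B, phi A + Rmul (matrix_inv X) B))"

definition psd_op_sum ::
  "(((complex^'n^'n) \<times> (complex^'m^'m)) \<Rightarrow> ((complex^'n^'n) \<times> (complex^'m^'m))) \<Rightarrow> bool" where
  "psd_op_sum T \<longleftrightarrow> (\<forall>v. cnonneg (hs (fst v) (fst (T v)) + hs (snd v) (snd (T v))))"

end

theory Submission
  imports Defs
begin

text \<open>
  Write F = phi A and Y = X^-1. Adjointness turns the quadratic form of the block operator
  at (A, B) into <phi(A^* A), X> + <F, B> + <B, F> + <B, B Y>, and completing the square gives
  <phi(A^* A) - F^* F, X> + <F X + B, (F X + B) Y>. The second term is nonnegative and
  vanishes for B = -F X. So the block operator is positive for every X > 0 iff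
  <phi(A^* A) - F^* F, X> \<ge> 0 for every X > 0, and by self-duality of the positive cone
  under the Hilbert-Schmidt pairing this says that phi(A^* A) - F^* F is positive
  semidefinite: test with X = x x^* + e I and let e \<rightarrow> 0 in one direction, write X as a
  sum of rank-one matrices x x^* in the other.
\<close>

definition tr :: "complex^'k^'k \<Rightarrow> complex" where
  "tr A = (\<Sum>i\<in>UNIV. A$i$i)"

definition outer :: "complex^'k \<Rightarrow> complex^'k^'k" where
  "outer v = (\<chi> i j. v$i * cnj (v$j))"

definition sesq :: "complex^'k^'k \<Rightarrow> complex^'k \<Rightarrow> complex^'k \<Rightarrow> complex" where
  "sesq A x y = (\<Sum>i\<in>UNIV. cnj (x$i) * (A *v y)$i)"

definition supported_on :: "'k set \<Rightarrow> complex^'k^'k \<Rightarrow> bool" where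
  "supported_on S X \<longleftrightarrow> (\<forall>i j. i \<notin> S \<or> j \<notin> S \<longrightarrow> X$i$j = 0)"

lemma cnonneg_add: "cnonneg a \<Longrightarrow> cnonneg b \<Longrightarrow> cnonneg (a + b)"
  by (simp add: cnonneg_def)

lemma cnonneg_cnj [simp]: "cnonneg (cnj a) \<longleftrightarrow> cnonneg a"
  by (simp add: cnonneg_def)

lemma cnonneg_sum: "(\<And>i. i \<in> S \<Longrightarrow> cnonneg (f i)) \<Longrightarrow> cnonneg (sum f S)"
  by (induction S rule: infinite_finite_induct)
     (auto simp: cnonneg_def Re_sum Im_sum intro: sum_nonneg)

lemma cnonneg_if_cnonneg_add_eps:
  assumes "\<And>e. e > 0 \<Longrightarrow> cnonneg (a + complex_of_real e * b)"
  shows "cnonneg a"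
proof -
  have Im: "Im a + e * Im b = 0" and Re: "Re a + e * Re b \<ge> 0" if "e > 0" for e
    using assms[OF that] by (simp_all add: cnonneg_def)
  have "Im a = 0"
    using Im[of 1] Im[of 2] by simp
  moreover have "Re a \<ge> 0"
  proof (rule ccontr)
    assume neg: "\<not> Re a \<ge> 0"
    define e where "e = - Re a / (\<bar>Re b\<bar> + 1)"
    have "e > 0"
      using neg by (simp add: e_def divide_neg_pos add_nonneg_pos)
    moreover have "e * Re b < - Re a"
    proof -
      have "e * Re b \<le> e * \<bar>Re b\<bar>"
        using \<open>e > 0\<close> by (simp add: mult_left_mono)
      also have "\<dots> < e * (\<bar>Re b\<bar> + 1)"
        using \<open>e > 0\<close> by simp
      finally show ?thesis
        by (simp add: e_def)
    qed
    ultimately show False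
      using Re[of e] by simp
  qed
  ultimately show ?thesis
    by (simp add: cnonneg_def)
qed

lemma psd_iff_sesq: "psd A \<longleftrightarrow> (\<forall>x. cnonneg (sesq A x x))"
  by (simp add: psd_def sesq_def)

lemma sesq_add_left: "sesq A (x + y) z = sesq A x z + sesq A y z"
  by (simp add: sesq_def sum.distrib algebra_simps)

lemma sesq_add_right: "sesq A x (y + z) = sesq A x y + sesq A x z"
  by (simp add: sesq_def sum.distrib algebra_simps matrix_vector_mult_def)

lemma sesq_scale_left: "sesq A (c *s x) z = cnj c * sesq A x z"
  by (simp add: sesq_def sum_distrib_left algebra_simps)

lemma sesq_scale_right: "sesq A x (c *s z) = c * sesq A x z"
  by (simp add: sesq_def sum_distrib_left algebra_simps matrix_vector_mult_def)

lemma sesq_axis: "sesq A (axis i 1) (axis j 1) = A$i$j"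
  unfolding sesq_def axis_def matrix_vector_mult_def
  by (simp add: if_distrib [of cnj] if_distrib [of "\<lambda>c. c * _"] if_distrib [of "\<lambda>c. _ * c"]
      cong: if_cong)

lemma sesq_axis_left: "sesq A (axis k 1) v = (A *v v)$k"
  unfolding sesq_def axis_def
  by (simp add: if_distrib [of cnj] if_distrib [of "\<lambda>c. c * _"] cong: if_cong)

lemma sesq_axis_right: "sesq A v (axis k 1) = (\<Sum>i\<in>UNIV. cnj (v$i) * A$i$k)"
  unfolding sesq_def axis_def matrix_vector_mult_def
  by (simp add: if_distrib [of "\<lambda>c. _ * c"] cong: if_cong)

lemma sesq_add_axis:
  "sesq X (v + t *s axis k 1) (v + t *s axis k 1)
     = sesq X v v + t * sesq X v (axis k 1) + cnj t * sesq X (axis k 1) v + cnj t * t * X$k$k"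
  by (simp add: sesq_add_left sesq_add_right sesq_scale_left sesq_scale_right sesq_axis algebra_simps)

lemma sesq_add_matrix: "sesq (A + B) x y = sesq A x y + sesq B x y"
  by (simp add: sesq_def matrix_vector_mult_def sum.distrib algebra_simps)

lemma sesq_diff_matrix: "sesq (A - B) x y = sesq A x y - sesq B x y"
  by (simp add: sesq_def matrix_vector_mult_def sum_subtractf algebra_simps)

lemma sesq_csmult: "sesq (csmult a A) x y = a * sesq A x y"
  by (simp add: sesq_def csmult_def matrix_vector_mult_def sum_distrib_left algebra_simps)

lemma sesq_mat_1: "sesq (mat 1) x y = (\<Sum>i\<in>UNIV. cnj (x$i) * y$i)"
  by (simp add: sesq_def)

lemma sesq_mat_1_swap: "sesq (mat 1) y x = cnj (sesq (mat 1) x y)"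
  by (simp add: sesq_mat_1 mult.commute)

lemma sesq_outer: "sesq (outer u) x y = sesq (mat 1) x u * sesq (mat 1) u y"
  unfolding sesq_mat_1
  by (simp add: sesq_def outer_def matrix_vector_mult_def sum_distrib_left sum_distrib_right
      algebra_simps) (rule sum.swap)

lemma sesq_cadj: "sesq (cadj A) x y = sesq (mat 1) (A *v x) y"
proof -
  have "sesq (cadj A) x y = (\<Sum>l\<in>UNIV. \<Sum>i\<in>UNIV. cnj (x$i) * cnj (A$l$i) * y$l)"
    unfolding sesq_def cadj_def matrix_vector_mult_def
    by (subst sum.swap) (simp add: sum_distrib_left mult.assoc)
  also have "\<dots> = sesq (mat 1) (A *v x) y"
    by (simp add: sesq_mat_1 matrix_vector_mult_def sum_distrib_left mult.commute)
  finally show ?thesis .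
qed

lemma sesq_cadj_mult: "sesq (cadj A ** B) x y = sesq (mat 1) (A *v x) (B *v y)"
  by (metis sesq_def sesq_cadj matrix_vector_mul_assoc)

lemma sesq_mat_1_self: "sesq (mat 1) v v = complex_of_real (\<Sum>i\<in>UNIV. (cmod (v$i))\<^sup>2)"
  unfolding sesq_mat_1 of_real_sum complex_norm_square by (simp add: mult.commute)

lemma psd_hermitian:
  assumes "psd A"
  shows "A$i$j = cnj (A$j$i)"
proof -
  have real: "Im (sesq A x x) = 0" for x
    using assms by (simp add: psd_iff_sesq cnonneg_def)
  have "sesq A (axis i 1 + axis j 1) (axis i 1 + axis j 1) = A$i$i + A$i$j + A$j$i + A$j$j"
    by (simp add: sesq_add_left sesq_add_right sesq_axis)
  moreover have "sesq A (axis i 1 + \<i> *s axis j 1) (axis i 1 + \<i> *s axis j 1)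
      = A$i$i + \<i> * A$i$j - \<i> * A$j$i + A$j$j"
    by (simp add: sesq_add_axis sesq_axis)
  ultimately show ?thesis
    using real[of "axis i 1"] real[of "axis j 1"]
      real[of "axis i 1 + axis j 1"] real[of "axis i 1 + \<i> *s axis j 1"]
    by (simp add: sesq_axis complex_eq_iff)
qed

lemma psd_cadj: "psd A \<Longrightarrow> cadj A = A"
  by (simp add: cadj_def vec_eq_iff) (metis psd_hermitian complex_cnj_cnj)

lemma psd_diag_nonneg: "psd X \<Longrightarrow> cnonneg (X$k$k)"
  by (metis psd_iff_sesq sesq_axis)

lemma psd_zero_diag_imp_zero_column:
  assumes "psd X" and "X$k$k = 0"
  shows "X$i$k = 0"
proof (rule ccontr)
  define a where "a = X$i$k"
  assume "X$i$k \<noteq> 0"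
  then have "cmod a > 0"
    by (simp add: a_def)
  define r where "r = (Re (X$i$i) + 1) / (2 * (cmod a)\<^sup>2)"
  define t where "t = - complex_of_real r * cnj a"
  have "X$k$i = cnj a"
    using psd_hermitian[OF assms(1), of k i] by (simp add: a_def)
  then have "sesq X (axis i 1 + t *s axis k 1) (axis i 1 + t *s axis k 1) = X$i$i + t * a + cnj t * cnj a"
    by (simp add: sesq_add_axis sesq_axis assms(2) a_def)
  moreover have "cnonneg (sesq X (axis i 1 + t *s axis k 1) (axis i 1 + t *s axis k 1))"
    using assms(1) by (simp add: psd_iff_sesq)
  ultimately have "Re (X$i$i) + Re (t * a) + Re (cnj t * cnj a) \<ge> 0"
    by (simp add: cnonneg_def)
  moreover have "Re (t * a) = - (r * (cmod a)\<^sup>2)" and "Re (cnj t * cnj a) = - (r * (cmod a)\<^sup>2)"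
    unfolding cmod_power2 by (simp_all add: t_def power2_eq_square algebra_simps)
  moreover have "r * (cmod a)\<^sup>2 = (Re (X$i$i) + 1) / 2"
    using \<open>cmod a > 0\<close> by (simp add: r_def)
  ultimately show False
    by argo
qed

lemma psd_schur_complement:
  assumes "psd X" and "X$k$k \<noteq> 0"
  shows "psd (X - csmult (1 / X$k$k) (outer (column k X)))"
  unfolding psd_iff_sesq
proof
  fix v
  define c where "c = X$k$k"
  define s where "s = (X *v v)$k"
  have "cnj c = c"
    using psd_diag_nonneg[OF assms(1), of k] by (simp add: c_def cnonneg_def complex_eq_iff)
  have col: "sesq (mat 1) (column k X) v = s"
    using psd_hermitian[OF assms(1), of k]
    by (simp add: sesq_mat_1 s_def column_def matrix_vector_mult_def)
  have "sesq X v (axis k 1) = cnj s"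
    using psd_hermitian[OF assms(1), of _ k]
    by (simp add: sesq_axis_right s_def matrix_vector_mult_def mult.commute)
  define t where "t = - s / c"
  have "cnj t = - cnj s / c"
    using \<open>cnj c = c\<close> by (simp add: t_def)
  \<comment> \<open>Minimising the quadratic form of X over the k-th coordinate of v leaves the Schur complement.\<close>
  have "sesq X (v + t *s axis k 1) (v + t *s axis k 1) = sesq X v v + t * cnj s + cnj t * s + cnj t * t * c"
    using \<open>sesq X v (axis k 1) = cnj s\<close> by (simp add: sesq_add_axis sesq_axis_left s_def c_def)
  also have "\<dots> = sesq X v v - s * cnj s / c"
    using assms(2) unfolding \<open>cnj t = - cnj s / c\<close> by (simp add: t_def c_def field_simps)
  also have "\<dots> = sesq (X - csmult (1 / c) (outer (column k X))) v v"
    by (simp add: sesq_diff_matrix sesq_csmult sesq_outer col sesq_mat_1_swap[of v])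
  finally show "cnonneg (sesq (X - csmult (1 / X$k$k) (outer (column k X))) v v)"
    using assms(1) by (metis psd_iff_sesq c_def)
qed

lemma supported_on_schur_complement:
  assumes "psd X" and "supported_on (insert k S) X" and "X$k$k \<noteq> 0"
  shows "supported_on S (X - csmult (1 / X$k$k) (outer (column k X)))"
  unfolding supported_on_def
proof (intro allI impI)
  fix i j
  assume "i \<notin> S \<or> j \<notin> S"
  then consider "i = k" | "j = k" | "X$i$j = 0" "X$i$k = 0 \<or> X$j$k = 0"
    using assms(2) unfolding supported_on_def by blast
  then show "(X - csmult (1 / X$k$k) (outer (column k X)))$i$j = 0"
  proof cases
    case 1
    then show ?thesis
      using assms(3) psd_hermitian[OF assms(1), of k j]
      by (simp add: csmult_def outer_def column_def)
  next
    case 2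
    moreover have "cnj (X$k$k) = X$k$k"
      using psd_diag_nonneg[OF assms(1), of k] by (simp add: cnonneg_def complex_eq_iff)
    ultimately show ?thesis
      using assms(3) by (simp add: csmult_def outer_def column_def)
  next
    case 3
    then show ?thesis
      by (auto simp: csmult_def outer_def column_def)
  qed
qed

lemma outer_scale: "outer (a *s u) = csmult (a * cnj a) (outer u)"
  by (simp add: outer_def csmult_def vec_eq_iff algebra_simps)

lemma psd_supported_eq_sum_outer:
  assumes "finite S" and "psd X" and "supported_on S X"
  shows "\<exists>v. X = (\<Sum>k\<in>S. outer (v k))"
  using assms
proof (induction S arbitrary: X rule: finite_induct)
  case empty
  then have "X = 0"
    by (simp add: supported_on_def vec_eq_iff)
  then show ?case
    by simp
next
  case (insert k S)
  have "\<exists>u Y. psd Y \<and> supported_on S Y \<and> X = Y + outer u"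
  proof (cases "X$k$k = 0")
    case True
    then have "X$i$k = 0" and "X$k$i = 0" for i
      using psd_zero_diag_imp_zero_column[OF insert.prems(1) True] psd_hermitian[OF insert.prems(1), of k i]
      by simp_all
    then have "supported_on S X"
      using insert.prems(2) unfolding supported_on_def by (metis insertE)
    then show ?thesis
      using insert.prems(1) by (intro exI[of _ 0] exI[of _ X]) (simp add: outer_def vec_eq_iff)
  next
    case False
    define c where "c = Re (X$k$k)"
    have "X$k$k = complex_of_real c" and "c > 0"
      using psd_diag_nonneg[OF insert.prems(1), of k] False
      by (auto simp: c_def cnonneg_def complex_eq_iff)
    moreover have "(complex_of_real (sqrt c))\<^sup>2 = complex_of_real c"
      using \<open>c > 0\<close> by (simp flip: of_real_power)
    ultimately have "csmult (1 / X$k$k) (outer (column k X))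
        = outer (complex_of_real (1 / sqrt c) *s column k X)"
      by (simp add: outer_scale power2_eq_square[symmetric] power_divide)
    then show ?thesis
      using psd_schur_complement[OF insert.prems(1) False]
        supported_on_schur_complement[OF insert.prems False]
      by (metis diff_add_cancel)
  qed
  then obtain u Y where "psd Y" "supported_on S Y" "X = Y + outer u"
    by blast
  moreover obtain v where "Y = (\<Sum>l\<in>S. outer (v l))"
    using insert.IH \<open>psd Y\<close> \<open>supported_on S Y\<close> by blast
  moreover have "(\<Sum>l\<in>S. outer ((v(k := u)) l)) = (\<Sum>l\<in>S. outer (v l))"
    using insert.hyps(2) by (intro sum.cong) auto
  ultimately have "X = (\<Sum>l\<in>insert k S. outer ((v(k := u)) l))"
    using insert.hyps by (simp add: add.commute)
  then show ?case
    by blast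
qed

lemma psd_eq_sum_outer:
  fixes X :: "complex^'k^'k"
  assumes "psd X"
  shows "\<exists>v :: 'k \<Rightarrow> complex^'k. X = (\<Sum>k\<in>UNIV. outer (v k))"
  using psd_supported_eq_sum_outer[OF finite assms] by (simp add: supported_on_def)

lemma matrix_add_rdistrib: "((A::complex^'k^'k) + B) ** C = A ** C + B ** C"
  by (simp add: matrix_matrix_mult_def vec_eq_iff sum.distrib algebra_simps)

lemma tr_comm: "tr ((A::complex^'k^'k) ** B) = tr (B ** A)"
  unfolding tr_def matrix_matrix_mult_def by (simp, subst sum.swap) (simp add: mult.commute)

lemma cadj_cadj [simp]: "cadj (cadj A) = A"
  by (simp add: cadj_def vec_eq_iff)

lemma cadj_mult: "cadj ((A::complex^'k^'k) ** B) = cadj B ** cadj A"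
  by (simp add: cadj_def matrix_matrix_mult_def vec_eq_iff mult.commute)

lemma hs_tr: "hs A B = tr (cadj A ** B)"
  unfolding hs_def tr_def cadj_def matrix_matrix_mult_def by (simp, subst sum.swap) simp

lemma hs_cnj: "hs A B = cnj (hs B A)"
  by (simp add: hs_def mult.commute)

lemma hs_zero_left [simp]: "hs 0 B = 0"
  by (simp add: hs_def)

lemma hs_zero_right [simp]: "hs A 0 = 0"
  by (simp add: hs_def)

lemma hs_add_left: "hs (A + B) C = hs A C + hs B C"
  by (simp add: hs_def sum.distrib algebra_simps)

lemma hs_add_right: "hs A (B + C) = hs A B + hs A C"
  by (simp add: hs_def sum.distrib algebra_simps)

lemma hs_diff_left: "hs (A - B) C = hs A C - hs B C"
  by (simp add: hs_def sum_subtractf algebra_simps)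

lemma hs_csmult_right: "hs A (csmult c B) = c * hs A B"
  by (simp add: hs_def csmult_def sum_distrib_left algebra_simps)

lemma hs_sum_right: "hs A (\<Sum>k\<in>S. B k) = (\<Sum>k\<in>S. hs A (B k))"
  by (induction S rule: infinite_finite_induct) (simp_all add: hs_add_right)

lemma hs_outer_right: "hs A (outer v) = cnj (sesq A v v)"
  by (simp add: hs_def sesq_def outer_def matrix_vector_mult_def sum_distrib_left algebra_simps)

lemma hs_mult_right: "hs A (B ** C) = hs (cadj B ** A) C"
  by (simp add: hs_tr cadj_mult matrix_mul_assoc)

lemma hs_mult_left: "hs (A ** C) B = hs A (B ** cadj C)"
  by (metis hs_tr cadj_mult tr_comm matrix_mul_assoc)

lemma is_hs_adjoint_left: "is_hs_adjoint psi phi \<Longrightarrow> hs A (psi B) = hs (phi A) B"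
  by (metis is_hs_adjoint_def hs_cnj)

lemma psd_cadj_mult_self: "psd (cadj A ** A)"
  by (simp add: psd_iff_sesq sesq_cadj_mult sesq_mat_1_self cnonneg_def sum_nonneg)

lemma hs_psd_nonneg:
  fixes X :: "complex^'k^'k"
  assumes "psd P" and "psd X"
  shows "cnonneg (hs P X)"
proof -
  obtain v :: "'k \<Rightarrow> complex^'k" where "X = (\<Sum>k\<in>UNIV. outer (v k))"
    using psd_eq_sum_outer[OF assms(2)] by blast
  then have "hs P X = (\<Sum>k\<in>UNIV. cnj (sesq P (v k) (v k)))"
    by (simp add: hs_sum_right hs_outer_right)
  then show ?thesis
    using assms(1) by (simp add: psd_iff_sesq cnonneg_sum)
qed

lemma hs_mult_psd_nonneg: "psd Y \<Longrightarrow> cnonneg (hs D (D ** Y))"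
  by (simp add: hs_mult_right hs_psd_nonneg psd_cadj_mult_self)

lemma pd_iff_sesq: "pd X \<longleftrightarrow> (\<forall>x. x \<noteq> 0 \<longrightarrow> Im (sesq X x x) = 0 \<and> 0 < Re (sesq X x x))"
  by (simp add: pd_def sesq_def Let_def)

lemma pd_imp_psd:
  assumes "pd X"
  shows "psd X"
  unfolding psd_iff_sesq
proof
  fix x
  show "cnonneg (sesq X x x)"
  proof (cases "x = 0")
    case True
    then show ?thesis
      by (simp add: sesq_def cnonneg_def)
  next
    case False
    then show ?thesis
      using assms by (simp add: pd_iff_sesq cnonneg_def less_imp_le)
  qed
qed

lemma pd_imp_invertible:
  assumes "pd X"
  shows "invertible X"
proof -
  have "x = 0" if "X *v x = 0" for x
    using assms that by (auto simp: pd_iff_sesq sesq_def)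
  then show ?thesis
    by (simp add: invertible_left_inverse matrix_left_invertible_ker)
qed

lemma invertible_matrix_inv:
  assumes "invertible X"
  shows "X ** matrix_inv X = mat 1" and "matrix_inv X ** X = mat 1"
  using someI_ex[OF assms[unfolded invertible_def]] by (simp_all add: matrix_inv_def)

lemma psd_matrix_inv:
  assumes "pd X"
  shows "psd (matrix_inv X)"
  unfolding psd_iff_sesq
proof
  fix v
  define w where "w = matrix_inv X *v v"
  have "v = X *v w"
    using invertible_matrix_inv(1)[OF pd_imp_invertible[OF assms]]
    by (simp add: w_def matrix_vector_mul_assoc)
  then have "sesq (matrix_inv X) v v = cnj (sesq X w w)"
    by (simp add: sesq_def w_def mult.commute)
  then show "cnonneg (sesq (matrix_inv X) v v)"
    using pd_imp_psd[OF assms] by (simp add: psd_iff_sesq)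
qed

lemma pd_outer_add_scaled_id:
  fixes x :: "complex^'k"
  assumes "e > 0"
  shows "pd (outer x + csmult (complex_of_real e) (mat 1))"
  unfolding pd_iff_sesq
proof (intro allI impI)
  fix v :: "complex^'k"
  assume "v \<noteq> 0"
  then obtain i where "v$i \<noteq> 0"
    by (metis vec_eq_iff zero_index)
  then have "(\<Sum>i\<in>UNIV. (cmod (v$i))\<^sup>2) > 0"
    by (intro sum_pos2[where i = i]) auto
  then have "(cmod (sesq (mat 1) x v))\<^sup>2 + e * (\<Sum>i\<in>UNIV. (cmod (v$i))\<^sup>2) > 0"
    using assms by (intro add_nonneg_pos) simp_all
  moreover have "sesq (outer x + csmult (complex_of_real e) (mat 1)) v v
      = complex_of_real ((cmod (sesq (mat 1) x v))\<^sup>2 + e * (\<Sum>i\<in>UNIV. (cmod (v$i))\<^sup>2))"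
    by (simp add: sesq_add_matrix sesq_csmult sesq_outer sesq_mat_1_self sesq_mat_1_swap[of v]
        complex_norm_square mult.commute del: of_real_power)
  ultimately show "Im (sesq (outer x + csmult (complex_of_real e) (mat 1)) v v) = 0 \<and>
      0 < Re (sesq (outer x + csmult (complex_of_real e) (mat 1)) v v)"
    by simp
qed

lemma psd_if_hs_pd_nonneg:
  assumes "\<And>X. pd X \<Longrightarrow> cnonneg (hs P X)"
  shows "psd P"
  unfolding psd_iff_sesq
proof
  fix x
  have "cnonneg (cnj (sesq P x x) + complex_of_real e * hs P (mat 1))" if "e > 0" for e
    using assms[OF pd_outer_add_scaled_id[OF that, of x]]
    by (simp add: hs_add_right hs_csmult_right hs_outer_right)
  then have "cnonneg (cnj (sesq P x x))"
    by (rule cnonneg_if_cnonneg_add_eps)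
  then show "cnonneg (sesq P x x)"
    by simp
qed

lemma block_op_quadratic_form:
  assumes adj: "is_hs_adjoint psi phi" and "cadj X = X" and "invertible X"
  shows "hs A (fst (block_op phi psi X (A, B))) + hs B (snd (block_op phi psi X (A, B)))
       = hs (phi (cadj A ** A) - cadj (phi A) ** phi A) X
         + hs (phi A ** X + B) ((phi A ** X + B) ** matrix_inv X)"
proof -
  define F where "F = phi A"
  define Y where "Y = matrix_inv X"
  have "X ** Y = mat 1" and "Y ** X = mat 1"
    using invertible_matrix_inv[OF assms(3)] by (simp_all add: Y_def)
  have "hs A (A ** psi X) = hs (phi (cadj A ** A)) X"
    by (simp add: hs_mult_right is_hs_adjoint_left[OF adj])
  moreover have "hs A (psi B) = hs F B"
    by (simp add: F_def is_hs_adjoint_left[OF adj])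
  moreover have "(F ** X + B) ** Y = F + B ** Y"
    using \<open>X ** Y = mat 1\<close> by (simp add: matrix_add_rdistrib matrix_mul_assoc[symmetric])
  moreover have "hs (F ** X) F = hs (cadj F ** F) X"
    by (subst hs_mult_left) (simp add: hs_mult_right \<open>cadj X = X\<close>)
  moreover have "hs (F ** X) (B ** Y) = hs F B"
    by (subst hs_mult_left) (simp add: \<open>cadj X = X\<close> \<open>Y ** X = mat 1\<close> matrix_mul_assoc[symmetric])
  ultimately show ?thesis
    by (simp add: block_op_def Rmul_def F_def[symmetric] Y_def[symmetric]
        hs_add_left hs_add_right hs_diff_left)
qed

theorem theorem4p1:
  fixes phi :: "complex^'n::finite^'n \<Rightarrow> complex^'m::finite^'m"
    and psi :: "complex^'m^'m \<Rightarrow> complex^'n^'n"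
  assumes "clin phi"
    and "positive_map phi"
    and "is_hs_adjoint psi phi"
  shows "(\<forall>K. psd (phi (cadj K ** K) - cadj (phi K) ** phi K))
     \<longleftrightarrow> (\<forall>X. pd X \<longrightarrow> psd_op_sum (block_op phi psi X))"
proof -
  note quadratic_form = block_op_quadratic_form[OF assms(3) psd_cadj[OF pd_imp_psd] pd_imp_invertible]
  show ?thesis
  proof
    assume gap_psd: "\<forall>K. psd (phi (cadj K ** K) - cadj (phi K) ** phi K)"
    show "\<forall>X. pd X \<longrightarrow> psd_op_sum (block_op phi psi X)"
      unfolding psd_op_sum_def split_paired_All fst_conv snd_conv
    proof (intro allI impI)
      fix X :: "complex^'m^'m" and A B
      assume "pd X"
      then show "cnonneg (hs A (fst (block_op phi psi X (A, B))) + hs B (snd (block_op phi psi X (A, B))))"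
        unfolding quadratic_form[OF \<open>pd X\<close> \<open>pd X\<close>] using gap_psd
        by (intro cnonneg_add hs_psd_nonneg hs_mult_psd_nonneg) (simp_all add: pd_imp_psd psd_matrix_inv)
    qed
  next
    assume block_psd: "\<forall>X. pd X \<longrightarrow> psd_op_sum (block_op phi psi X)"
    show "\<forall>K. psd (phi (cadj K ** K) - cadj (phi K) ** phi K)"
    proof (intro allI psd_if_hs_pd_nonneg)
      fix K and X :: "complex^'m^'m"
      assume "pd X"
      then have "cnonneg (hs K (fst (block_op phi psi X (K, - (phi K ** X))))
          + hs (- (phi K ** X)) (snd (block_op phi psi X (K, - (phi K ** X)))))"
        using block_psd unfolding psd_op_sum_def split_paired_All fst_conv snd_conv by blast
      then show "cnonneg (hs (phi (cadj K ** K) - cadj (phi K) ** phi K) X)"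
        unfolding quadratic_form[OF \<open>pd X\<close> \<open>pd X\<close>] by simp
    qed
  qed
qed

end
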